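(* Let $A,B$ be abstract state spaces and let $\omega\in A\otimes_{\max}B$ be a state that is steering for its $B$-marginal $\omega^B$, where $\omega^B$ lies in the interior of $B_+$ (so that $\mathrm{Face}(\omega^B)=B_+$). If $\hat\omega:A^*\to B$ is injective, then $\hat\omega$ is an order-isomorphism. If moreover $B$ (and therefore $A$) is irreducible, then $\omega$ is pure in $A\otimes_{\max}B$, i.e., lies on an extremal ray of the positive cone of $A\otimes_{\max}B$.
   Context: An abstract state space is a pair $(A,u_A)$ where $A$ is a finite-dimensional real vector space with a closed, pointed, generating convex cone $A_+$, and $u_A$ is an interior point of the dual cone $A^*_+$. An observable on $A$ is a finite family of effects $a_i\in A^*_+$ with $\sum_i a_i=u_A$. $A\otimes_{\max}B$ is the space of bilinear forms on $A^*\times B^*$ nonnegative on $A^*_+\times B^*_+$; a state is such a form with $\omega(u_A,u_B)=1$; $\hat\omega:A^*\to B$ is $\hat\omega(a)(b)=\omega(a,b)$ and $\omega^B=\hat\omega(u_A)$. An ensemble for $\beta\in B_+$ is a finite family $\beta_i\in B_+$ with $\sum_i\beta_i=\beta$; $\omega$ is steering for its $B$-marginal if every ensemble $\{\beta_i\}$ for $\omega^B$ equals $\{\hat\omega(x_i)\}$ for some observable $\{x_i\}$ on $A$. $\mathrm{Face}(\beta)$ is the smallest face of $B_+$ containing $\beta$. An order-isomorphism is a linear bijection $\phi$ with $\phi(x)\ge0$ iff $x\ge0$. An ordered linear space is irreducible if it is not an ordered direct sum of two nonzero ordered subspaces. *)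

theory Defs
  imports "HOL-Analysis.Analysis"
begin

text \<open>Convention: a finite-dimensional real ordered vector space A is modelled by a
  Euclidean space type 'a together with its positive cone Ap :: 'a set.  The dual
  space A* is identified with 'a itself via the inner product pairing, so a functional
  f on A is represented by the vector f with f(x) = f \<bullet> x.\<close>

definition dual_cone :: "'a::euclidean_space set \<Rightarrow> 'a set" where
  "dual_cone C = {y. \<forall>x\<in>C. 0 \<le> y \<bullet> x}"

definition abstract_state_space :: "'a::euclidean_space set \<Rightarrow> 'a \<Rightarrow> bool" where
  "abstract_state_space C u \<longleftrightarrow>
     closed C \<and> convex_cone C \<and> C \<inter> uminus ` C = {0} \<and> span C = UNIV
     \<and> u \<in> interior (dual_cone C)"

definition observable :: "'a::euclidean_space set \<Rightarrow> 'a \<Rightarrow> nat \<Rightarrow> (nat \<Rightarrow> 'a) \<Rightarrow> bool" where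
  "observable C u n x \<longleftrightarrow> (\<forall>i<n. x i \<in> dual_cone C) \<and> (\<Sum>i<n. x i) = u"

definition max_tensor_cone ::
  "'a::euclidean_space set \<Rightarrow> 'b::euclidean_space set \<Rightarrow> ('a \<Rightarrow> 'b \<Rightarrow> real) set" where
  "max_tensor_cone CA CB = {\<omega>. bilinear \<omega> \<and>
      (\<forall>a\<in>dual_cone CA. \<forall>b\<in>dual_cone CB. 0 \<le> \<omega> a b)}"

definition max_tensor_state ::
  "'a::euclidean_space set \<Rightarrow> 'a \<Rightarrow> 'b::euclidean_space set \<Rightarrow> 'b \<Rightarrow> ('a \<Rightarrow> 'b \<Rightarrow> real) \<Rightarrow> bool" where
  "max_tensor_state CA uA CB uB \<omega> \<longleftrightarrow> \<omega> \<in> max_tensor_cone CA CB \<and> \<omega> uA uB = 1"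

text \<open>hat-omega : A* \<rightarrow> B, the unique element of B with (hat \<omega> a) \<bullet> b = \<omega> a b.\<close>
definition omega_hat :: "('a \<Rightarrow> 'b::euclidean_space \<Rightarrow> real) \<Rightarrow> 'a \<Rightarrow> 'b" where
  "omega_hat \<omega> a = (\<Sum>b\<in>Basis. \<omega> a b *\<^sub>R b)"

definition marginal_B :: "('a \<Rightarrow> 'b::euclidean_space \<Rightarrow> real) \<Rightarrow> 'a \<Rightarrow> 'b" where
  "marginal_B \<omega> uA = omega_hat \<omega> uA"

definition ensemble :: "'b::euclidean_space set \<Rightarrow> 'b \<Rightarrow> nat \<Rightarrow> (nat \<Rightarrow> 'b) \<Rightarrow> bool" where
  "ensemble CB \<beta> n \<beta>s \<longleftrightarrow> (\<forall>i<n. \<beta>s i \<in> CB) \<and> (\<Sum>i<n. \<beta>s i) = \<beta>"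

definition steering ::
  "'a::euclidean_space set \<Rightarrow> 'a \<Rightarrow> 'b::euclidean_space set \<Rightarrow> ('a \<Rightarrow> 'b \<Rightarrow> real) \<Rightarrow> bool" where
  "steering CA uA CB \<omega> \<longleftrightarrow>
     (\<forall>n \<beta>s. ensemble CB (marginal_B \<omega> uA) n \<beta>s \<longrightarrow>
        (\<exists>x. observable CA uA n x \<and> (\<forall>i<n. omega_hat \<omega> (x i) = \<beta>s i)))"

definition order_isomorphism :: "('a::real_vector \<Rightarrow> 'b::real_vector) \<Rightarrow> 'a set \<Rightarrow> 'b set \<Rightarrow> bool" where
  "order_isomorphism f P Q \<longleftrightarrow> linear f \<and> bij f \<and> (\<forall>x. f x \<in> Q \<longleftrightarrow> x \<in> P)"

definition irreducible_ordered :: "'a::real_vector set \<Rightarrow> bool" where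
  "irreducible_ordered C \<longleftrightarrow>
     \<not> (\<exists>V W. subspace V \<and> subspace W \<and> V \<noteq> {0} \<and> W \<noteq> {0} \<and> V \<inter> W = {0}
            \<and> (\<forall>z. \<exists>v\<in>V. \<exists>w\<in>W. z = v + w)
            \<and> C = {v + w | v w. v \<in> V \<inter> C \<and> w \<in> W \<inter> C})"

definition extremal_ray_form :: "('a \<Rightarrow> 'b \<Rightarrow> real) set \<Rightarrow> ('a \<Rightarrow> 'b \<Rightarrow> real) \<Rightarrow> bool" where
  "extremal_ray_form K \<omega> \<longleftrightarrow> \<omega> \<in> K \<and> \<omega> \<noteq> (\<lambda>a b. 0) \<and>
     (\<forall>\<sigma> \<tau>. \<sigma> \<in> K \<longrightarrow> \<tau> \<in> K \<longrightarrow> (\<forall>a b. \<omega> a b = \<sigma> a b + \<tau> a b)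
        \<longrightarrow> (\<exists>t\<ge>0. \<forall>a b. \<sigma> a b = t * \<omega> a b))"

end

theory Submission
  imports Defs
begin

text \<open>Steering with an interior marginal \<open>\<omega>\<^sup>B\<close> realises every \<open>\<beta> \<in> B\<^sub>+\<close> up to
  scale: for small \<open>t > 0\<close> the pair \<open>t\<beta>, \<omega>\<^sup>B - t\<beta>\<close> is an ensemble for \<open>\<omega>\<^sup>B\<close>, and the
  effect steering it to \<open>t\<beta>\<close> is positive. Hence \<open>omega_hat \<omega>\<close> maps \<open>A\<^sup>*\<^sub>+\<close> onto
  \<open>B\<^sub>+\<close> and, being injective, is an order isomorphism.

  A decomposition \<open>\<omega> = \<sigma> + \<tau>\<close> in the maximal tensor cone then gives the linear map
  \<open>f = omega_hat \<sigma> \<circ> (omega_hat \<omega>)\<^sup>-\<^sup>1\<close> with \<open>0 \<le> f \<le> id\<close> on \<open>B\<^sub>+\<close>. Such a map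
  multiplies each extreme ray of \<open>B\<^sub>+\<close> by a scalar; if two of these scalars differed,
  with \<open>l\<close> one of them, the kernel and the range of \<open>f - l id\<close> would split \<open>B\<^sub>+\<close> into
  an ordered direct sum. So for irreducible \<open>B\<close> the map \<open>f\<close> is a multiple of the
  identity, i.e. \<open>\<sigma>\<close> is a multiple of \<open>\<omega>\<close>.\<close>

lemma inner_omega_hat:
  assumes "bilinear \<omega>"
  shows "omega_hat \<omega> a \<bullet> y = \<omega> a y"
proof -
  have lin: "linear (\<omega> a)" using assms unfolding bilinear_def by auto
  have "\<omega> a y = \<omega> a (\<Sum>b\<in>Basis. (y \<bullet> b) *\<^sub>R b)"
    by (simp add: euclidean_representation)
  also have "\<dots> = (\<Sum>b\<in>Basis. (y \<bullet> b) * \<omega> a b)"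
    by (simp add: linear_sum[OF lin] linear_scale[OF lin])
  also have "\<dots> = omega_hat \<omega> a \<bullet> y"
    unfolding omega_hat_def inner_sum_left
    by (rule sum.cong) (auto simp: inner_commute)
  finally show ?thesis by simp
qed

lemma linear_omega_hat:
  assumes "bilinear \<omega>"
  shows "linear (omega_hat \<omega>)"
proof (rule linearI)
  fix x y show "omega_hat \<omega> (x + y) = omega_hat \<omega> x + omega_hat \<omega> y"
    by (simp add: omega_hat_def bilinear_ladd[OF assms] scaleR_add_left sum.distrib)
next
  fix c x show "omega_hat \<omega> (c *\<^sub>R x) = c *\<^sub>R omega_hat \<omega> x"
    by (simp add: omega_hat_def bilinear_lmul[OF assms] scaleR_sum_right)
qed

lemma omega_hat_add:
  assumes "\<forall>a b. \<omega> a b = \<sigma> a b + \<tau> a b"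
  shows "omega_hat \<omega> a = omega_hat \<sigma> a + omega_hat \<tau> a"
  using assms by (simp add: omega_hat_def scaleR_add_left sum.distrib)

lemma dual_cone_dual_cone:
  fixes C :: "'a::euclidean_space set"
  assumes "closed C" "convex_cone C"
  shows "dual_cone (dual_cone C) = C"
proof
  show "C \<subseteq> dual_cone (dual_cone C)"
    by (auto simp: dual_cone_def inner_commute)
next
  show "dual_cone (dual_cone C) \<subseteq> C"
  proof
    fix y assume y: "y \<in> dual_cone (dual_cone C)"
    show "y \<in> C"
    proof (rule ccontr)
      assume "y \<notin> C"
      moreover have "convex C" using assms(2) by (simp add: convex_cone_def)
      ultimately obtain a t where at: "a \<bullet> y < t" "\<forall>x\<in>C. t < a \<bullet> x"
        using separating_hyperplane_closed_point assms(1) by blast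
      have "0 \<in> C" using assms(2) by (simp add: convex_cone_iff)
      then have t: "t < 0" using at by auto
      have "a \<in> dual_cone C"
        unfolding dual_cone_def
      proof (intro CollectI ballI)
        fix x assume x: "x \<in> C"
        show "0 \<le> a \<bullet> x"
        proof (rule ccontr)
          assume "\<not> 0 \<le> a \<bullet> x"
          then have neg: "a \<bullet> x < 0" by simp
          \<comment> \<open>scaling \<open>x\<close> inside the cone pushes \<open>a \<bullet> x\<close> below \<open>t\<close>\<close>
          define c where "c = t / (a \<bullet> x) + 1"
          have "c > 0" using neg t by (simp add: c_def divide_neg_neg add_pos_pos)
          then have "c *\<^sub>R x \<in> C" using convex_cone_scaleR[OF assms(2)] x by simp
          then have "t < a \<bullet> (c *\<^sub>R x)" using at by blast
          also have "a \<bullet> (c *\<^sub>R x) = t + a \<bullet> x"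
            using neg by (simp add: c_def algebra_simps)
          finally show False using neg by simp
        qed
      qed
      then have "0 \<le> a \<bullet> y" using y by (auto simp: dual_cone_def inner_commute)
      then show False using at t by simp
    qed
  qed
qed

lemma omega_hat_in_cone:
  assumes "\<sigma> \<in> max_tensor_cone CA CB" "closed CB" "convex_cone CB" "a \<in> dual_cone CA"
  shows "omega_hat \<sigma> a \<in> CB"
proof -
  have "omega_hat \<sigma> a \<in> dual_cone (dual_cone CB)"
    using assms(1,4) by (auto simp: dual_cone_def max_tensor_cone_def inner_omega_hat)
  then show ?thesis using dual_cone_dual_cone[OF assms(2,3)] by simp
qed

lemma interior_dual_cone_norm_bound:
  fixes C :: "'a::euclidean_space set"
  assumes "u \<in> interior (dual_cone C)"
  obtains \<epsilon> where "\<epsilon> > 0" "\<And>y. y \<in> C \<Longrightarrow> \<epsilon> * norm y \<le> u \<bullet> y"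
proof -
  obtain e where e: "e > 0" "ball u e \<subseteq> dual_cone C"
    using assms mem_interior by blast
  have "e/2 * norm y \<le> u \<bullet> y" if y: "y \<in> C" for y
  proof (cases "y = 0")
    case True then show ?thesis by simp
  next
    case False
    define z where "z = u - (e/2 / norm y) *\<^sub>R y"
    have "dist u z = e/2" using False e by (simp add: z_def dist_norm)
    then have "z \<in> dual_cone C" using e by auto
    then have "0 \<le> z \<bullet> y" using y by (auto simp: dual_cone_def)
    also have "z \<bullet> y = u \<bullet> y - e/2 * norm y"
      using False by (simp add: z_def algebra_simps dot_square_norm power2_eq_square)
    finally show ?thesis by simp
  qed
  then show ?thesis using e that[of "e/2"] by simp
qed

lemma dim_kernel_add_dim_range_le:
  fixes g :: "'a::euclidean_space \<Rightarrow> 'a"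
  assumes "linear g"
  shows "dim {x. g x = 0} + dim (range g) \<le> DIM('a)"
proof -
  let ?K = "{x. g x = 0}"
  let ?U = "orthogonal_comp ?K"
  have sK: "subspace ?K" using assms by (rule linear_subspace_kernel)
  have KU: "?K + ?U = UNIV" by (rule subspace_sum_orthogonal_comp[OF sK])
  have "{x + y |x y. x \<in> ?K \<and> y \<in> ?U} = ?K + ?U" by (auto simp: set_plus_def)
  then have dims: "dim ?K + dim ?U = DIM('a)"
    using dim_sums_Int[OF sK subspace_orthogonal_comp[of ?K]] KU orthogonal_Int_0[OF sK] by simp
  have "range g \<subseteq> g ` ?U"
  proof
    fix z assume "z \<in> range g"
    then obtain x where x: "z = g x" by auto
    have "x \<in> ?K + ?U" using KU by simp
    then obtain k v where "x = k + v" "k \<in> ?K" "v \<in> ?U" by (rule set_plus_elim)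
    then show "z \<in> g ` ?U" using x linear_add[OF assms] by auto
  qed
  then have "dim (range g) \<le> dim ?U"
    using dim_subset dim_image_le[OF assms] order_trans by blast
  then show ?thesis using dims by simp
qed

lemma kernel_range_complementary:
  fixes g :: "'a::euclidean_space \<Rightarrow> 'a"
  assumes lg: "linear g" and spanning: "span S = UNIV"
    and split: "\<forall>s\<in>S. g s = 0 \<or> s \<in> range g"
  shows "{x. g x = 0} \<inter> range g = {0}"
    and "\<forall>z. \<exists>v\<in>{x. g x = 0}. \<exists>w\<in>range g. z = v + w"
proof -
  define V W where "V = {x. g x = 0}" and "W = range g"
  have sV: "subspace V" unfolding V_def by (rule linear_subspace_kernel[OF lg])
  have sW: "subspace W" unfolding W_def by (rule linear_subspace_image[OF lg subspace_UNIV])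
  define P where "P = {x + y |x y. x \<in> V \<and> y \<in> W}"
  have "S \<subseteq> P"
  proof
    fix s assume "s \<in> S"
    then have "s \<in> V \<or> s \<in> W" using split by (auto simp: V_def W_def)
    then show "s \<in> P" unfolding P_def using subspace_0[OF sV] subspace_0[OF sW]
      by (metis (mono_tags, lifting) add_0 add.right_neutral mem_Collect_eq)
  qed
  moreover have "subspace P" unfolding P_def by (rule subspace_sums[OF sV sW])
  ultimately have "span S \<subseteq> P" by (rule span_minimal)
  then have PU: "P = UNIV" using spanning by auto
  have "dim P + dim (V \<inter> W) = dim V + dim W" unfolding P_def by (rule dim_sums_Int[OF sV sW])
  moreover have "dim V + dim W \<le> DIM('a)"
    unfolding V_def W_def by (rule dim_kernel_add_dim_range_le[OF lg])
  moreover have "dim P = DIM('a)" using PU by simp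
  ultimately have "dim (V \<inter> W) = 0" by linarith
  then show "{x. g x = 0} \<inter> range g = {0}"
    using subspace_0[OF sV] subspace_0[OF sW] by (auto simp: dim_eq_0 V_def W_def)
  show "\<forall>z. \<exists>v\<in>{x. g x = 0}. \<exists>w\<in>range g. z = v + w"
    using PU unfolding P_def V_def W_def by blast
qed

locale cone_with_unit =
  fixes C :: "'a::euclidean_space set" and u :: 'a
  assumes closed_cone: "closed C" and convex_cone: "convex_cone C"
    and unit_interior: "u \<in> interior (dual_cone C)"
begin

definition base :: "'a set" where
  "base = C \<inter> {x. u \<bullet> x = 1}"

lemma unit_pos:
  assumes "y \<in> C" "y \<noteq> 0"
  shows "0 < u \<bullet> y"
proof -
  obtain \<epsilon> where "\<epsilon> > 0" "\<epsilon> * norm y \<le> u \<bullet> y"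
    using interior_dual_cone_norm_bound[OF unit_interior] assms(1) by blast
  then show ?thesis using assms(2) by (smt (verit) mult_pos_pos zero_less_norm_iff)
qed

lemma unit_nonneg: "y \<in> C \<Longrightarrow> 0 \<le> u \<bullet> y"
  using unit_pos by (cases "y = 0") (auto intro: less_imp_le)

lemma scaleR_in_cone: "y \<in> C \<Longrightarrow> 0 \<le> c \<Longrightarrow> c *\<^sub>R y \<in> C"
  using convex_cone convex_cone_iff by (cases "c = 0") auto

lemma normalized_in_base:
  assumes "y \<in> C" "y \<noteq> 0"
  shows "(1 / (u \<bullet> y)) *\<^sub>R y \<in> base"
  using assms unit_pos[OF assms] scaleR_in_cone[OF assms(1)] by (simp add: base_def)

lemma extreme_point_nonzero: "e extreme_point_of base \<Longrightarrow> e \<noteq> 0"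
  by (auto simp: extreme_point_of_def base_def)

lemma sum_scaled_in_cone:
  assumes "finite F" "F \<subseteq> C" "\<forall>e\<in>F. 0 \<le> a e"
  shows "(\<Sum>e\<in>F. a e *\<^sub>R e) \<in> C"
  using assms
proof (induction F rule: finite_induct)
  case empty then show ?case using convex_cone by (simp add: convex_cone_iff)
next
  case (insert x F)
  then show ?case using convex_cone scaleR_in_cone by (simp add: convex_cone_iff)
qed

lemma compact_base: "compact base"
proof -
  obtain \<epsilon> where \<epsilon>: "\<epsilon> > 0" "\<And>y. y \<in> C \<Longrightarrow> \<epsilon> * norm y \<le> u \<bullet> y"
    using interior_dual_cone_norm_bound[OF unit_interior] by blast
  have "closed base"
    unfolding base_def using closed_cone closed_hyperplane by blast
  moreover have "bounded base" unfolding bounded_iff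
  proof (intro exI ballI)
    fix x assume "x \<in> base"
    then have "\<epsilon> * norm x \<le> 1" using \<epsilon>(2)[of x] by (simp add: base_def)
    then show "norm x \<le> 1/\<epsilon>" using \<epsilon> by (simp add: field_simps)
  qed
  ultimately show ?thesis by (simp add: compact_eq_bounded_closed)
qed

lemma convex_base: "convex base"
  unfolding base_def using convex_cone convex_hyperplane
  by (intro convex_Int) (auto simp: convex_cone_def)

lemma conic_combination_of_extreme_points:
  assumes "c \<in> C"
  shows "\<exists>F a. finite F \<and> F \<subseteq> {e. e extreme_point_of base} \<and> (\<forall>e\<in>F. 0 \<le> a e)
               \<and> c = (\<Sum>e\<in>F. a e *\<^sub>R e)"
proof (cases "c = 0")
  case True then show ?thesis by (intro exI[of _ "{}"]) auto
next
  case False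
  define r where "r = u \<bullet> c"
  have r: "r > 0" using unit_pos assms False by (simp add: r_def)
  have "(1/r) *\<^sub>R c \<in> convex hull {e. e extreme_point_of base}"
    using normalized_in_base[OF assms False] Krein_Milman_Minkowski[OF compact_base convex_base]
    by (simp add: r_def)
  then obtain F w where F: "finite F" "F \<subseteq> {e. e extreme_point_of base}" "\<forall>x\<in>F. 0 \<le> w x"
    "(\<Sum>v\<in>F. w v *\<^sub>R v) = (1/r) *\<^sub>R c"
    unfolding convex_hull_explicit by blast
  have "c = r *\<^sub>R ((1/r) *\<^sub>R c)" using r by simp
  also have "\<dots> = (\<Sum>v\<in>F. (r * w v) *\<^sub>R v)"
    by (simp add: F(4)[symmetric] scaleR_sum_right)
  finally show ?thesis using F r by (intro exI[of _ F] exI[of _ "\<lambda>v. r * w v"]) auto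
qed

lemma span_extreme_points:
  assumes "span C = UNIV"
  shows "span {e. e extreme_point_of base} = UNIV"
proof -
  have "C \<subseteq> span {e. e extreme_point_of base}"
  proof
    fix c assume "c \<in> C"
    then obtain F a where F: "finite F" "F \<subseteq> {e. e extreme_point_of base}"
      "c = (\<Sum>e\<in>F. a e *\<^sub>R e)"
      using conic_combination_of_extreme_points by blast
    show "c \<in> span {e. e extreme_point_of base}" unfolding F(3)
      by (intro span_sum span_scale span_base) (use F in auto)
  qed
  then have "span C \<subseteq> span {e. e extreme_point_of base}"
    using span_minimal subspace_span by blast
  then show ?thesis using assms by auto
qed

lemma extreme_point_eigenvector:
  assumes between: "\<forall>x\<in>C. f x \<in> C \<and> x - f x \<in> C" and e: "e extreme_point_of base"
  shows "f e = (u \<bullet> f e) *\<^sub>R e"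
proof -
  define p q where "p = f e" and "q = e - f e"
  have eB: "e \<in> base" using e by (simp add: extreme_point_of_def)
  then have pC: "p \<in> C" and qC: "q \<in> C" using between by (auto simp: base_def p_def q_def)
  have pq: "u \<bullet> p + u \<bullet> q = 1" using eB by (simp add: base_def q_def p_def inner_diff_right)
  consider "p = 0" | "q = 0" | "p \<noteq> 0" "q \<noteq> 0" by blast
  then show ?thesis
  proof cases
    case 1 then show ?thesis by (simp add: p_def)
  next
    case 2 then show ?thesis using eB by (simp add: p_def q_def base_def)
  next
    case 3
    define a b where "a = (1 / (u \<bullet> p)) *\<^sub>R p" and "b = (1 / (u \<bullet> q)) *\<^sub>R q"
    have aB: "a \<in> base" and bB: "b \<in> base"
      using normalized_in_base pC qC 3 by (auto simp: a_def b_def)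
    have up: "u \<bullet> p > 0" and uq: "u \<bullet> q > 0" using unit_pos pC qC 3 by auto
    have "e = p + q" by (simp add: p_def q_def)
    moreover have "1 - u \<bullet> q = u \<bullet> p" using pq by simp
    ultimately have comb: "e = (1 - u \<bullet> q) *\<^sub>R a + (u \<bullet> q) *\<^sub>R b"
      using up uq by (simp add: a_def b_def)
    have "a = b"
    proof (rule ccontr)
      assume "a \<noteq> b"
      then have "e \<in> open_segment a b"
        unfolding in_segment using comb uq pq up by (intro conjI exI[of _ "u \<bullet> q"]) auto
      then show False using e aB bB by (auto simp: extreme_point_of_def)
    qed
    then have "e = a" using comb by (simp add: algebra_simps)
    then have "p = (u \<bullet> p) *\<^sub>R e" using up by (simp add: a_def)
    then show ?thesis by (simp only: p_def)
  qed
qed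

lemma not_irreducible_if_kernel_range_split:
  assumes sp: "span C = UNIV" and lg: "linear g"
    and split: "\<And>e. e extreme_point_of base \<Longrightarrow> g e = 0 \<or> e \<in> range g"
    and e0: "e0 extreme_point_of base" "g e0 = 0"
    and e1: "e1 extreme_point_of base" "g e1 \<noteq> 0"
  shows "\<not> irreducible_ordered C"
proof -
  define V W where "V = {x. g x = 0}" and "W = range g"
  have sV: "subspace V" unfolding V_def by (rule linear_subspace_kernel[OF lg])
  have sW: "subspace W" unfolding W_def by (rule linear_subspace_image[OF lg subspace_UNIV])
  have Vn: "V \<noteq> {0}" using e0 extreme_point_nonzero V_def by blast
  have Wn: "W \<noteq> {0}" using e1 split[OF e1(1)] extreme_point_nonzero W_def by blast
  have VW: "V \<inter> W = {0}" and decomp: "\<forall>z. \<exists>v\<in>V. \<exists>w\<in>W. z = v + w"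
    using kernel_range_complementary[OF lg span_extreme_points[OF sp]] split
    unfolding V_def W_def by auto
  have "C = {v + w | v w. v \<in> V \<inter> C \<and> w \<in> W \<inter> C}"
  proof (intro subset_antisym subsetI)
    fix c assume "c \<in> C"
    then obtain F a where F: "finite F" "F \<subseteq> {e. e extreme_point_of base}"
      "\<forall>e\<in>F. 0 \<le> a e" "c = (\<Sum>e\<in>F. a e *\<^sub>R e)"
      using conic_combination_of_extreme_points by blast
    have FC: "F \<subseteq> C" using F(2) by (auto simp: extreme_point_of_def base_def)
    define v w where "v = (\<Sum>e\<in>F \<inter> V. a e *\<^sub>R e)" and "w = (\<Sum>e\<in>F - V. a e *\<^sub>R e)"
    have "c = v + w" unfolding v_def w_def F(4) by (rule sum.Int_Diff[OF F(1)])
    moreover have "v \<in> V" unfolding v_def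
      by (intro subspace_sum[OF sV] subspace_scale[OF sV]) auto
    moreover have "w \<in> W" unfolding w_def
      using F split by (intro subspace_sum[OF sW] subspace_scale[OF sW]) (auto simp: V_def W_def)
    moreover have "v \<in> C" "w \<in> C" unfolding v_def w_def
      using F FC by (auto intro!: sum_scaled_in_cone)
    ultimately show "c \<in> {v + w | v w. v \<in> V \<inter> C \<and> w \<in> W \<inter> C}" by blast
  qed (use convex_cone_add[OF convex_cone] in auto)
  then show ?thesis
    unfolding irreducible_ordered_def using sV sW Vn Wn VW decomp by blast
qed

lemma scalar_if_between_zero_and_identity:
  assumes sp: "span C = UNIV" and irr: "irreducible_ordered C" and lf: "linear f"
    and between: "\<forall>x\<in>C. f x \<in> C \<and> x - f x \<in> C"
  shows "\<exists>l\<ge>0. \<forall>x. f x = l *\<^sub>R x"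
proof -
  have "{e. e extreme_point_of base} \<noteq> {}"
    using span_extreme_points[OF sp] nonzero_Basis nonempty_Basis by fastforce
  then obtain e0 where e0: "e0 extreme_point_of base" by blast
  define l where "l = u \<bullet> f e0"
  have "l \<ge> 0"
    using unit_nonneg between e0 by (simp add: l_def extreme_point_of_def base_def)
  define g where "g x = f x - l *\<^sub>R x" for x
  have lg: "linear g" unfolding g_def by (intro linear_compose_sub lf linear_scaleR)
  have g_eigen: "g e = (u \<bullet> f e - l) *\<^sub>R e" if "e extreme_point_of base" for e
    using extreme_point_eigenvector[OF between that] by (simp add: g_def algebra_simps)
  have all_l: "u \<bullet> f e = l" if e: "e extreme_point_of base" for e
  proof (rule ccontr)
    assume ne: "u \<bullet> f e \<noteq> l"
    have "g e = 0 \<or> e \<in> range g" if "e extreme_point_of base" for e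
    proof (cases "u \<bullet> f e = l")
      case False
      then have "g ((1 / (u \<bullet> f e - l)) *\<^sub>R e) = e"
        using g_eigen[OF that] linear_scale[OF lg] by simp
      then show ?thesis by (metis rangeI)
    qed (simp add: g_eigen[OF that])
    moreover have "g e0 = 0" "g e \<noteq> 0"
      using g_eigen e0 e ne extreme_point_nonzero by (auto simp: l_def)
    ultimately show False
      using not_irreducible_if_kernel_range_split[OF sp lg _ e0] e irr by blast
  qed
  have "f x = l *\<^sub>R x" for x
  proof (rule linear_eq_on[OF lf linear_scaleR])
    show "x \<in> span {e. e extreme_point_of base}" using span_extreme_points[OF sp] by simp
    show "f b = l *\<^sub>R b" if "b \<in> {e. e extreme_point_of base}" for b
      using extreme_point_eigenvector[OF between] all_l that by auto
  qed
  then show ?thesis using \<open>l \<ge> 0\<close> by blast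
qed

end

lemma steering_preimage_in_dual_cone:
  assumes steer: "steering CA uA CB \<omega>" and "bilinear \<omega>" and cone: "convex_cone CB"
    and interior: "marginal_B \<omega> uA \<in> interior CB" and \<beta>: "\<beta> \<in> CB"
  shows "\<exists>a\<in>dual_cone CA. omega_hat \<omega> a = \<beta>"
proof -
  define m where "m = marginal_B \<omega> uA"
  obtain e where e: "e > 0" "ball m e \<subseteq> CB" using interior mem_interior m_def by metis
  have n: "norm \<beta> + 1 > 0" using norm_ge_zero[of \<beta>] by linarith
  define t where "t = e / (norm \<beta> + 1)"
  have t: "t > 0" using e n by (simp add: t_def)
  have "t * norm \<beta> < t * (norm \<beta> + 1)" using t by simp
  also have "\<dots> = e" using n by (simp add: t_def)
  finally have "t * norm \<beta> < e" .
  then have "m - t *\<^sub>R \<beta> \<in> CB" using e t by (auto simp: dist_norm)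
  moreover have "t *\<^sub>R \<beta> \<in> CB" using convex_cone_scaleR[OF cone] t \<beta> by simp
  ultimately have "ensemble CB m 2 (\<lambda>i. if i = 0 then t *\<^sub>R \<beta> else m - t *\<^sub>R \<beta>)"
    by (auto simp: ensemble_def numeral_2_eq_2 lessThan_Suc less_Suc_eq)
  then obtain x where x: "observable CA uA 2 x" "omega_hat \<omega> (x 0) = t *\<^sub>R \<beta>"
    using steer unfolding steering_def m_def by fastforce
  have "(1/t) *\<^sub>R x 0 \<in> dual_cone CA"
    using x(1) t by (auto simp: observable_def dual_cone_def)
  moreover have "omega_hat \<omega> ((1/t) *\<^sub>R x 0) = \<beta>"
    using linear_scale[OF linear_omega_hat[OF \<open>bilinear \<omega>\<close>]] x(2) t by simp
  ultimately show ?thesis by blast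
qed

lemma omega_hat_order_isomorphism:
  assumes "closed CB" "convex_cone CB" "span CB = UNIV" "\<omega> \<in> max_tensor_cone CA CB"
    and "steering CA uA CB \<omega>" "marginal_B \<omega> uA \<in> interior CB" "inj (omega_hat \<omega>)"
  shows "order_isomorphism (omega_hat \<omega>) (dual_cone CA) CB"
proof -
  have bil: "bilinear \<omega>" using assms(4) by (simp add: max_tensor_cone_def)
  note lin = linear_omega_hat[OF bil]
  note onto = steering_preimage_in_dual_cone[OF assms(5) bil assms(2,6)]
  have "span CB \<subseteq> range (omega_hat \<omega>)"
    using onto by (intro span_minimal linear_subspace_image[OF lin subspace_UNIV]) blast
  then have "surj (omega_hat \<omega>)" using assms(3) by auto
  moreover have "omega_hat \<omega> x \<in> CB \<longleftrightarrow> x \<in> dual_cone CA" for x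
    using onto[of "omega_hat \<omega> x"] omega_hat_in_cone[OF assms(4,1,2)] injD[OF assms(7)]
    by metis
  ultimately show ?thesis
    unfolding order_isomorphism_def using lin assms(7) by (simp add: bij_def)
qed

lemma (in cone_with_unit) extremal_ray_if_order_isomorphism:
  assumes sp: "span C = UNIV" and irr: "irreducible_ordered C"
    and \<omega>: "\<omega> \<in> max_tensor_cone CA C" "\<omega> \<noteq> (\<lambda>a b. 0)"
    and iso: "order_isomorphism (omega_hat \<omega>) (dual_cone CA) C"
  shows "extremal_ray_form (max_tensor_cone CA C) \<omega>"
  unfolding extremal_ray_form_def
proof (intro conjI allI impI \<omega>)
  fix \<sigma> \<tau> assume \<sigma>: "\<sigma> \<in> max_tensor_cone CA C" and \<tau>: "\<tau> \<in> max_tensor_cone CA C"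
    and sum: "\<forall>a b. \<omega> a b = \<sigma> a b + \<tau> a b"
  define h where "h = omega_hat \<omega>"
  have lh: "linear h" and bh: "bij h" and pos: "\<And>x. h x \<in> C \<longleftrightarrow> x \<in> dual_cone CA"
    using iso by (auto simp: order_isomorphism_def h_def)
  obtain hi where hi: "linear hi" "hi \<circ> h = id"
    using linear_injective_left_inverse[OF lh bij_is_inj[OF bh]] by blast
  have hih: "hi (h a) = a" for a using hi(2) by (metis comp_apply id_apply)
  have hhi: "h (hi x) = x" for x using bij_is_surj[OF bh] hih by (metis surjD)
  have bs: "bilinear \<sigma>" using \<sigma> by (simp add: max_tensor_cone_def)
  define f where "f = omega_hat \<sigma> \<circ> hi"
  have "\<forall>x\<in>C. f x \<in> C \<and> x - f x \<in> C"
  proof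
    fix x assume "x \<in> C"
    then have a: "hi x \<in> dual_cone CA" using pos hhi by metis
    have "x - f x = omega_hat \<tau> (hi x)"
      using omega_hat_add[OF sum, of "hi x"] hhi[of x] by (simp add: f_def h_def algebra_simps)
    then show "f x \<in> C \<and> x - f x \<in> C"
      using omega_hat_in_cone[OF _ closed_cone convex_cone a] \<sigma> \<tau> by (simp add: f_def)
  qed
  moreover have "linear f"
    unfolding f_def by (rule linear_compose[OF hi(1) linear_omega_hat[OF bs]])
  ultimately obtain l where l: "l \<ge> 0" "\<forall>x. f x = l *\<^sub>R x"
    using scalar_if_between_zero_and_identity[OF sp irr] by blast
  have "\<sigma> a b = l * \<omega> a b" for a b
  proof -
    have "\<sigma> a b = f (h a) \<bullet> b" by (simp add: f_def hih inner_omega_hat[OF bs])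
    also have "\<dots> = l * \<omega> a b"
      using l \<omega>(1) by (simp add: h_def inner_omega_hat max_tensor_cone_def)
    finally show ?thesis .
  qed
  then show "\<exists>t\<ge>0. \<forall>a b. \<sigma> a b = t * \<omega> a b" using l(1) by blast
qed

theorem corollary5p5:
  fixes CA :: "'a::euclidean_space set" and uA :: 'a
    and CB :: "'b::euclidean_space set" and uB :: 'b
    and \<omega> :: "'a \<Rightarrow> 'b \<Rightarrow> real"
  assumes "abstract_state_space CA uA" and "abstract_state_space CB uB"
    and "max_tensor_state CA uA CB uB \<omega>"
    and "steering CA uA CB \<omega>"
    and "marginal_B \<omega> uA \<in> interior CB"
    and "inj (omega_hat \<omega>)"
  shows "order_isomorphism (omega_hat \<omega>) (dual_cone CA) CB
         \<and> (irreducible_ordered CB \<longrightarrow> extremal_ray_form (max_tensor_cone CA CB) \<omega>)"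
proof -
  have B: "closed CB" "convex_cone CB" "span CB = UNIV" "uB \<in> interior (dual_cone CB)"
    using assms(2) by (auto simp: abstract_state_space_def)
  interpret B: cone_with_unit CB uB using B by unfold_locales
  have \<omega>: "\<omega> \<in> max_tensor_cone CA CB" "\<omega> \<noteq> (\<lambda>a b. 0)"
    using assms(3) by (auto simp: max_tensor_state_def)
  have iso: "order_isomorphism (omega_hat \<omega>) (dual_cone CA) CB"
    using omega_hat_order_isomorphism[OF B(1-3) \<omega>(1) assms(4-6)] .
  then show ?thesis
    using B.extremal_ray_if_order_isomorphism[OF B(3) _ \<omega>] by blast
qed

end
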